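(* (Bicomplex Schwarz inequality.) Let $M$ be a free $\mathbb{T}$-module with a finite $\mathbb{T}$-basis, $V$ its associated complex vector space, and $(\cdot,\cdot)$ a bicomplex scalar product on $M$ which is hyperbolic positive and closed on $V$. Then for all $\widehat X,\widehat Y\in M$, $$|(\widehat X,\widehat Y)|\le\big|(\widehat X,\widehat X)^{1/2}(\widehat Y,\widehat Y)^{1/2}\big|\le\sqrt2\,\|\widehat X\|\,\|\widehat Y\|.$$
   Context: Bicomplex numbers: $\mathbb{T}=\{z_1+z_2\mathbf{i_2}: z_1,z_2\in\mathbb{C}(\mathbf{i_1})\}$, $\mathbb{C}(\mathbf{i_1})=\{x+y\mathbf{i_1}: x,y\in\mathbb{R}\}$, $\mathbf{i_1}^2=\mathbf{i_2}^2=-1$, $\mathbf{i_1}\mathbf{i_2}=\mathbf{i_2}\mathbf{i_1}=\mathbf{j}$, $\mathbf{j}^2=1$ (commutative). Hyperbolic numbers $\mathbb{D}=\{x+y\mathbf{j}:x,y\in\mathbb{R}\}$. Idempotents $\mathbf{e_1}=(1+\mathbf{j})/2$, $\mathbf{e_2}=(1-\mathbf{j})/2$. For $w=z_1+z_2\mathbf{i_2}\in\mathbb{T}$, $|w|=\sqrt{|z_1|^2+|z_2|^2}$ (Euclidean norm in $\mathbb{R}^4$). Conjugation: $(z_1+z_2\mathbf{i_2})^{\dagger_3}=\overline{z_1}-\overline{z_2}\mathbf{i_2}$. $\mathbb{D}^+=\{a\mathbf{e_1}+b\mathbf{e_2}: a,b\ge 0\}$, and $(a\mathbf{e_1}+b\mathbf{e_2})^{1/2}=\sqrt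 a\,\mathbf{e_1}+\sqrt b\,\mathbf{e_2}$. $M$ has $\mathbb{T}$-basis $\{\widehat m_1,\dots,\widehat m_n\}$, $V=\{\sum x_l\widehat m_l: x_l\in\mathbb{C}(\mathbf{i_1})\}$; for $\widehat X=\sum x_l\widehat m_l$ with $x_l=x_{1l}\mathbf{e_1}+x_{2l}\mathbf{e_2}$, $x_{kl}\in\mathbb{C}(\mathbf{i_1})$, put $\widehat X_{\mathbf{e_k}}=\sum_l x_{kl}\widehat m_l\in V$. A bicomplex scalar product is a map $(\cdot,\cdot):M\times M\to\mathbb{T}$ with: $(\widehat X,\widehat Y_1+\widehat Y_2)=(\widehat X,\widehat Y_1)+(\widehat X,\widehat Y_2)$; $(\widehat X,\alpha\widehat Y)=\alpha(\widehat X,\widehat Y)$ for $\alpha\in\mathbb{T}$; $(\widehat X,\widehat Y)=(\widehat Y,\widehat X)^{\dagger_3}$; $(\widehat X,\widehat X)=0\iff\widehat X=0$. Hyperbolic positive: $(\widehat X,\widehat X)\in\mathbb{D}^+$ for all $\widehat X$. Closed on $V$: $(\widehat X,\widehat Y)\in\mathbb{C}(\mathbf{i_1})$ for $\widehat X,\widehat Y\in V$. For $\widehat Z\in V$, $\|\widehat Z\|=(\widehat Z,\widehat Z)^{1/2}$; for $\widehat X\in M$, $\|\widehat X\|:=\big|(\widehat X,\widehat X)^{1/2}\big|=\big((\|\widehat X_{\mathbf{e_1}}\|^2+\|\widehat X_{\mathbf{e_2}}\|^2)/2\big)^{1/2}$. *)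

theory Defs
  imports Complex_Main
begin

text \<open>Bicomplex numbers z1 + z2 i2 are represented as pairs (z1, z2) of complex numbers
(complex numbers play the role of C(i1), with i1 = ii).\<close>

type_synonym bicomplex = "complex \<times> complex"

definition bc_add :: "bicomplex \<Rightarrow> bicomplex \<Rightarrow> bicomplex" where
  "bc_add w v = (fst w + fst v, snd w + snd v)"

definition bc_mult :: "bicomplex \<Rightarrow> bicomplex \<Rightarrow> bicomplex" where
  "bc_mult w v = (fst w * fst v - snd w * snd v, fst w * snd v + snd w * fst v)"

definition bc_zero :: bicomplex where
  "bc_zero = (0, 0)"

definition bc_cnj3 :: "bicomplex \<Rightarrow> bicomplex" where
  "bc_cnj3 w = (cnj (fst w), - cnj (snd w))"

definition bc_norm :: "bicomplex \<Rightarrow> real" where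
  "bc_norm w = sqrt ((cmod (fst w))\<^sup>2 + (cmod (snd w))\<^sup>2)"

definition bc_in_C1 :: "bicomplex \<Rightarrow> bool" where
  "bc_in_C1 w \<longleftrightarrow> snd w = 0"

text \<open>The idempotents e1 = (1+j)/2, e2 = (1-j)/2, with j = i1 i2 = (0, ii).\<close>
definition bc_e1 :: bicomplex where "bc_e1 = (1/2, \<i>/2)"
definition bc_e2 :: bicomplex where "bc_e2 = (1/2, -\<i>/2)"

definition bc_of_real :: "real \<Rightarrow> bicomplex" where
  "bc_of_real r = (complex_of_real r, 0)"

text \<open>Idempotent components: w = (z1 - i1 z2) e1 + (z1 + i1 z2) e2.\<close>
definition bc_idem1 :: "bicomplex \<Rightarrow> complex" where
  "bc_idem1 w = fst w - \<i> * snd w"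
definition bc_idem2 :: "bicomplex \<Rightarrow> complex" where
  "bc_idem2 w = fst w + \<i> * snd w"

definition hyp_pos :: "bicomplex set" where
  "hyp_pos = {bc_add (bc_mult (bc_of_real a) bc_e1) (bc_mult (bc_of_real b) bc_e2)
               | a b. a \<ge> 0 \<and> b \<ge> 0}"

definition hyp_sqrt :: "bicomplex \<Rightarrow> bicomplex" where
  "hyp_sqrt w = bc_add (bc_mult (bc_of_real (sqrt (Re (bc_idem1 w)))) bc_e1)
                       (bc_mult (bc_of_real (sqrt (Re (bc_idem2 w)))) bc_e2)"

text \<open>The free T-module M with finite T-basis m_l (l in the finite type 'n) is identified
with its coordinate space: X = sum_l x_l m_l corresponds to (\<lambda>l. x_l).\<close>

definition mod_add :: "('n \<Rightarrow> bicomplex) \<Rightarrow> ('n \<Rightarrow> bicomplex) \<Rightarrow> ('n \<Rightarrow> bicomplex)" where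
  "mod_add X Y = (\<lambda>l. bc_add (X l) (Y l))"

definition mod_smult :: "bicomplex \<Rightarrow> ('n \<Rightarrow> bicomplex) \<Rightarrow> ('n \<Rightarrow> bicomplex)" where
  "mod_smult \<alpha> Y = (\<lambda>l. bc_mult \<alpha> (Y l))"

definition mod_zero :: "'n \<Rightarrow> bicomplex" where
  "mod_zero = (\<lambda>l. bc_zero)"

definition mod_V :: "('n \<Rightarrow> bicomplex) set" where
  "mod_V = {X. \<forall>l. bc_in_C1 (X l)}"

definition bicomplex_scalar_product ::
  "(('n::finite \<Rightarrow> bicomplex) \<Rightarrow> ('n \<Rightarrow> bicomplex) \<Rightarrow> bicomplex) \<Rightarrow> bool" where
  "bicomplex_scalar_product sp \<longleftrightarrow>
     (\<forall>X Y1 Y2. sp X (mod_add Y1 Y2) = bc_add (sp X Y1) (sp X Y2)) \<and>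
     (\<forall>X Y \<alpha>. sp X (mod_smult \<alpha> Y) = bc_mult \<alpha> (sp X Y)) \<and>
     (\<forall>X Y. sp X Y = bc_cnj3 (sp Y X)) \<and>
     (\<forall>X. sp X X = bc_zero \<longleftrightarrow> X = mod_zero)"

definition hyperbolic_positive ::
  "(('n \<Rightarrow> bicomplex) \<Rightarrow> ('n \<Rightarrow> bicomplex) \<Rightarrow> bicomplex) \<Rightarrow> bool" where
  "hyperbolic_positive sp \<longleftrightarrow> (\<forall>X. sp X X \<in> hyp_pos)"

definition closed_on_V ::
  "(('n \<Rightarrow> bicomplex) \<Rightarrow> ('n \<Rightarrow> bicomplex) \<Rightarrow> bicomplex) \<Rightarrow> bool" where
  "closed_on_V sp \<longleftrightarrow> (\<forall>X\<in>mod_V. \<forall>Y\<in>mod_V. bc_in_C1 (sp X Y))"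

definition mod_norm ::
  "(('n \<Rightarrow> bicomplex) \<Rightarrow> ('n \<Rightarrow> bicomplex) \<Rightarrow> bicomplex) \<Rightarrow> ('n \<Rightarrow> bicomplex) \<Rightarrow> real" where
  "mod_norm sp X = bc_norm (hyp_sqrt (sp X X))"

end

theory Submission
  imports Defs
begin

text \<open>Writing w = w1 e1 + w2 e2 identifies T with C \<times> C as rings; under this
identification dagger-3 is componentwise conjugation, D^+ is the set of pairs of
nonnegative reals and |w|^2 = (|w1|^2 + |w2|^2) / 2. Hence both idempotent components
of a hyperbolic positive bicomplex scalar product are positive semidefinite Hermitian
forms, to which the classical Cauchy-Schwarz inequality applies componentwise; this gives
the first inequality. The second is the estimate |w v| \<le> sqrt 2 |w| |v| for bicomplex
numbers, which follows from the same component formula for the norm.\<close>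

lemma nonneg_quadratic_imp_discrim_le:
  fixes a b c :: real
  assumes "0 \<le> a" and nonneg: "\<And>t. 0 \<le> a * t\<^sup>2 + 2 * c * t + b"
  shows "c\<^sup>2 \<le> a * b"
proof (cases "a = 0")
  case True
  have "c = 0"
  proof (rule ccontr)
    assume "c \<noteq> 0"
    then have "2 * c * (- (b + 1) / (2 * c)) + b = -1" by (simp add: field_simps)
    with nonneg[of "- (b + 1) / (2 * c)"] True show False by simp
  qed
  with True show ?thesis by simp
next
  case False
  with \<open>0 \<le> a\<close> have "0 < a" by simp
  have "0 \<le> a * (- c / a)\<^sup>2 + 2 * c * (- c / a) + b" by (rule nonneg)
  also have "\<dots> = (a * b - c\<^sup>2) / a" using \<open>0 < a\<close> by (simp add: field_simps power2_eq_square)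
  finally show ?thesis using \<open>0 < a\<close> by (simp add: zero_le_divide_iff)
qed

lemma hermitian_form_Cauchy_Schwarz:
  fixes f :: "'a \<Rightarrow> 'a \<Rightarrow> complex"
  assumes additive: "\<And>X Y Z. f X (add Y Z) = f X Y + f X Z"
    and homogeneous: "\<And>X Y c. f X (scale c Y) = c * f X Y"
    and hermitian: "\<And>X Y. f X Y = cnj (f Y X)"
    and nonneg: "\<And>X. 0 \<le> Re (f X X)"
  shows "(cmod (f X Y))\<^sup>2 \<le> Re (f X X) * Re (f Y Y)"
proof -
  have diag_real: "f Z Z = of_real (Re (f Z Z))" for Z
    using hermitian[of Z Z] by (simp add: complex_eq_iff)
  define a b q where "a = Re (f X X)" and "b = Re (f Y Y)" and "q = (cmod (f X Y))\<^sup>2"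
  have expand: "f (add (scale c X) Y) (add (scale c X) Y)
      = c * cnj c * f X X + c * cnj (f X Y) + cnj c * f X Y + f Y Y" for c
  proof -
    let ?Z = "add (scale c X) Y"
    have "f ?Z ?Z = c * cnj (f X ?Z) + cnj (f Y ?Z)"
      by (metis additive homogeneous hermitian)
    also have "\<dots> = c * cnj (c * f X X + f X Y) + cnj (c * f Y X + f Y Y)"
      by (simp add: additive homogeneous)
    finally show ?thesis using hermitian[of X X] hermitian[of Y Y] hermitian[of Y X]
      by (simp add: algebra_simps)
  qed
  have "0 \<le> (q * a) * t\<^sup>2 + 2 * (- q) * t + b" for t
  proof -
    let ?c = "- of_real t * f X Y"
    have "0 \<le> Re (f (add (scale ?c X) Y) (add (scale ?c X) Y))" by (rule nonneg)
    also have "\<dots> = (q * a) * t\<^sup>2 + 2 * (- q) * t + b"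
      unfolding expand q_def a_def b_def cmod_power2
      by (subst (1 2) diag_real) (simp add: power2_eq_square algebra_simps)
    finally show ?thesis .
  qed
  moreover have "0 \<le> a" "0 \<le> b" "0 \<le> q" using nonneg by (simp_all add: a_def b_def q_def)
  ultimately have "q * q \<le> q * (a * b)"
    using nonneg_quadratic_imp_discrim_le[of "q * a" "- q" b] by (simp add: power2_eq_square mult.assoc)
  with \<open>0 \<le> a\<close> \<open>0 \<le> b\<close> \<open>0 \<le> q\<close> have "q \<le> a * b"
    by (cases "q = 0") auto
  then show ?thesis by (simp add: a_def b_def q_def)
qed

definition bc_idems :: "(bicomplex \<Rightarrow> complex) set" where
  "bc_idems = {bc_idem1, bc_idem2}"

lemma bc_idem_add: "\<pi> \<in> bc_idems \<Longrightarrow> \<pi> (bc_add w v) = \<pi> w + \<pi> v"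
  by (auto simp: bc_idems_def bc_idem1_def bc_idem2_def bc_add_def algebra_simps)

lemma bc_idem_mult: "\<pi> \<in> bc_idems \<Longrightarrow> \<pi> (bc_mult w v) = \<pi> w * \<pi> v"
  by (auto simp: bc_idems_def bc_idem1_def bc_idem2_def bc_mult_def algebra_simps)

lemma bc_idem_cnj3: "\<pi> \<in> bc_idems \<Longrightarrow> \<pi> (bc_cnj3 w) = cnj (\<pi> w)"
  by (auto simp: bc_idems_def bc_idem1_def bc_idem2_def bc_cnj3_def)

lemma bc_idem_complex: "\<pi> \<in> bc_idems \<Longrightarrow> \<pi> (c, 0) = c"
  by (auto simp: bc_idems_def bc_idem1_def bc_idem2_def)

lemma bc_idem_of_real: "\<pi> \<in> bc_idems \<Longrightarrow> \<pi> (bc_of_real r) = of_real r"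
  by (auto simp: bc_idems_def bc_idem1_def bc_idem2_def bc_of_real_def)

lemma bc_idem_e1_e2:
  "bc_idem1 bc_e1 = 1" "bc_idem2 bc_e1 = 0" "bc_idem1 bc_e2 = 0" "bc_idem2 bc_e2 = 1"
  by (simp_all add: bc_idem1_def bc_idem2_def bc_e1_def bc_e2_def)

lemma bc_norm_nonneg: "0 \<le> bc_norm w"
  by (simp add: bc_norm_def)

lemma bc_norm_power2_idem:
  "(bc_norm w)\<^sup>2 = ((cmod (bc_idem1 w))\<^sup>2 + (cmod (bc_idem2 w))\<^sup>2) / 2"
  unfolding bc_norm_def bc_idem1_def bc_idem2_def cmod_power2
  by (simp add: power2_eq_square algebra_simps)

lemma bc_norm_le_idem:
  assumes "cmod (bc_idem1 w) \<le> cmod (bc_idem1 v)" and "cmod (bc_idem2 w) \<le> cmod (bc_idem2 v)"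
  shows "bc_norm w \<le> bc_norm v"
proof (rule power2_le_imp_le[OF _ bc_norm_nonneg])
  show "(bc_norm w)\<^sup>2 \<le> (bc_norm v)\<^sup>2"
    unfolding bc_norm_power2_idem using assms by (intro divide_right_mono add_mono power_mono) auto
qed

lemma bc_norm_mult_le: "bc_norm (bc_mult w v) \<le> sqrt 2 * bc_norm w * bc_norm v"
proof (rule power2_le_imp_le)
  define w1 w2 v1 v2 where "w1 = (cmod (bc_idem1 w))\<^sup>2" and "w2 = (cmod (bc_idem2 w))\<^sup>2"
    and "v1 = (cmod (bc_idem1 v))\<^sup>2" and "v2 = (cmod (bc_idem2 v))\<^sup>2"
  have "0 \<le> w1" "0 \<le> w2" "0 \<le> v1" "0 \<le> v2" by (simp_all add: w1_def w2_def v1_def v2_def)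
  then have "w1 * v1 + w2 * v2 \<le> (w1 + w2) * (v1 + v2)"
    by (simp add: algebra_simps)
  moreover have "(bc_norm (bc_mult w v))\<^sup>2 = (w1 * v1 + w2 * v2) / 2"
    unfolding bc_norm_power2_idem w1_def w2_def v1_def v2_def
    by (simp add: bc_idems_def bc_idem_mult norm_mult power_mult_distrib)
  moreover have "(sqrt 2 * bc_norm w * bc_norm v)\<^sup>2 = (w1 + w2) * (v1 + v2) / 2"
    unfolding power_mult_distrib bc_norm_power2_idem w1_def w2_def v1_def v2_def by simp
  ultimately show "(bc_norm (bc_mult w v))\<^sup>2 \<le> (sqrt 2 * bc_norm w * bc_norm v)\<^sup>2"
    by simp
  show "0 \<le> sqrt 2 * bc_norm w * bc_norm v" by (simp add: bc_norm_nonneg)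
qed

lemma hyp_sqrt_idem: "\<pi> \<in> bc_idems \<Longrightarrow> \<pi> (hyp_sqrt w) = of_real (sqrt (Re (\<pi> w)))"
  unfolding hyp_sqrt_def bc_idems_def
  by (auto simp: bc_idem_add bc_idem_mult bc_idem_of_real bc_idem_e1_e2 bc_idems_def)

lemma hyperbolic_positive_Re_idem_nonneg:
  assumes "hyperbolic_positive sp" and "\<pi> \<in> bc_idems"
  shows "0 \<le> Re (\<pi> (sp X X))"
proof -
  obtain a b where "0 \<le> a" "0 \<le> b"
    and "sp X X = bc_add (bc_mult (bc_of_real a) bc_e1) (bc_mult (bc_of_real b) bc_e2)"
    using assms(1) unfolding hyperbolic_positive_def hyp_pos_def by blast
  with assms(2) show ?thesis
    by (auto simp: bc_idem_add bc_idem_mult bc_idem_of_real bc_idem_e1_e2 bc_idems_def)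
qed

lemma scalar_product_idem_Cauchy_Schwarz:
  assumes sp: "bicomplex_scalar_product sp" and pos: "hyperbolic_positive sp"
    and \<pi>: "\<pi> \<in> bc_idems"
  shows "(cmod (\<pi> (sp X Y)))\<^sup>2 \<le> Re (\<pi> (sp X X)) * Re (\<pi> (sp Y Y))"
proof (rule hermitian_form_Cauchy_Schwarz
    [where f = "\<lambda>A B. \<pi> (sp A B)" and add = mod_add and scale = "\<lambda>c. mod_smult (c, 0)"])
  have additive: "sp A (mod_add B C) = bc_add (sp A B) (sp A C)"
    and homogeneous: "sp A (mod_smult \<alpha> B) = bc_mult \<alpha> (sp A B)"
    and hermitian: "sp A B = bc_cnj3 (sp B A)" for A B C \<alpha>
    using sp unfolding bicomplex_scalar_product_def by blast+
  show "\<pi> (sp A (mod_add B C)) = \<pi> (sp A B) + \<pi> (sp A C)" for A B C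
    by (simp add: additive bc_idem_add \<pi>)
  show "\<pi> (sp A (mod_smult (c, 0) B)) = c * \<pi> (sp A B)" for A B c
    by (simp add: homogeneous bc_idem_mult bc_idem_complex \<pi>)
  show "\<pi> (sp A B) = cnj (\<pi> (sp B A))" for A B
    by (subst hermitian) (simp add: bc_idem_cnj3 \<pi>)
  show "0 \<le> Re (\<pi> (sp A A))" for A
    by (rule hyperbolic_positive_Re_idem_nonneg[OF pos \<pi>])
qed

lemma bicomplex_Cauchy_Schwarz:
  assumes sp: "bicomplex_scalar_product sp" and pos: "hyperbolic_positive sp"
  shows "bc_norm (sp X Y) \<le> bc_norm (bc_mult (hyp_sqrt (sp X X)) (hyp_sqrt (sp Y Y)))"
proof -
  have "cmod (\<pi> (sp X Y)) \<le> cmod (\<pi> (bc_mult (hyp_sqrt (sp X X)) (hyp_sqrt (sp Y Y))))"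
    if \<pi>: "\<pi> \<in> bc_idems" for \<pi>
  proof -
    have "cmod (\<pi> (bc_mult (hyp_sqrt (sp X X)) (hyp_sqrt (sp Y Y))))
        = sqrt (Re (\<pi> (sp X X)) * Re (\<pi> (sp Y Y)))"
      using hyperbolic_positive_Re_idem_nonneg[OF pos \<pi>]
      by (simp add: bc_idem_mult hyp_sqrt_idem \<pi> norm_mult real_sqrt_mult)
    then show ?thesis
      using scalar_product_idem_Cauchy_Schwarz[OF sp pos \<pi>, of X Y] real_le_rsqrt by simp
  qed
  then show ?thesis
    by (intro bc_norm_le_idem) (simp_all add: bc_idems_def)
qed

theorem mainTheorem11:
  fixes sp :: "('n::finite \<Rightarrow> bicomplex) \<Rightarrow> ('n \<Rightarrow> bicomplex) \<Rightarrow> bicomplex"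
    and X Y :: "'n \<Rightarrow> bicomplex"
  assumes "bicomplex_scalar_product sp"
    and "hyperbolic_positive sp"
    and "closed_on_V sp"
  shows "bc_norm (sp X Y) \<le> bc_norm (bc_mult (hyp_sqrt (sp X X)) (hyp_sqrt (sp Y Y)))
       \<and> bc_norm (bc_mult (hyp_sqrt (sp X X)) (hyp_sqrt (sp Y Y)))
           \<le> sqrt 2 * mod_norm sp X * mod_norm sp Y"
  using bicomplex_Cauchy_Schwarz[OF assms(1,2)] bc_norm_mult_le
  unfolding mod_norm_def by blast

end
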